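(* Let $\operatorname{BTTB}_{n,k}(\mathbb{C})=\operatorname{Toep}_n(\mathbb{C})\circledast\operatorname{Toep}_k(\mathbb{C})$ be the space of $nk\times nk$ block-Toeplitz matrices with $n\times n$ blocks, each block a $k\times k$ Toeplitz matrix. The structure tensor of the matrix-vector product $\operatorname{BTTB}_{n,k}(\mathbb{C})\times\mathbb{C}^{nk}\to\mathbb{C}^{nk}$ has rank $(2k-1)(2n-1)$.
   Context: $\operatorname{Toep}_m(\mathbb{C})$ is the space of $m\times m$ Toeplitz matrices ($(i,j)$ entry depending only on $j-i$); $\circledast$ denotes the span of Kronecker products. Structure tensor of a bilinear map $\beta:U\times V\to W$: the unique $\mu_\beta\in U^*\otimes V^*\otimes W$ with $\beta(u,v)=\mu_\beta(u,v,\cdot)$. Rank: least number of decomposable tensors summing to the tensor. *)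

theory Defs
  imports Complex_Main
begin

definition tensor_rank ::
  "'a set \<Rightarrow> 'b set \<Rightarrow> 'c set \<Rightarrow> ('a \<Rightarrow> 'b \<Rightarrow> 'c \<Rightarrow> complex) \<Rightarrow> nat" where
  "tensor_rank A B C T =
     (LEAST r. \<exists>(x :: nat \<Rightarrow> 'a \<Rightarrow> complex) (y :: nat \<Rightarrow> 'b \<Rightarrow> complex)
                 (z :: nat \<Rightarrow> 'c \<Rightarrow> complex).
        \<forall>a\<in>A. \<forall>b\<in>B. \<forall>c\<in>C. T a b c = (\<Sum>l<r. x l a * y l b * z l c))"

text \<open>Index set of C^{nk}: pairs (i,p), i<n (block index), p<k (index within block).\<close>
definition vidx :: "nat \<Rightarrow> nat \<Rightarrow> (nat \<times> nat) set" where
  "vidx n k = {..<n} \<times> {..<k}"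

text \<open>Parameters of BTTB_{n,k}: (s,t) with |s| < n, |t| < k (a basis of the space).\<close>
definition bttb_params :: "nat \<Rightarrow> nat \<Rightarrow> (int \<times> int) set" where
  "bttb_params n k = {-(int n - 1)..int n - 1} \<times> {-(int k - 1)..int k - 1}"

definition bttb :: "(int \<Rightarrow> int \<Rightarrow> complex) \<Rightarrow> (nat \<times> nat) \<Rightarrow> (nat \<times> nat) \<Rightarrow> complex" where
  "bttb t = (\<lambda>(i,p) (j,q). t (int j - int i) (int q - int p))"

definition matvec :: "nat \<Rightarrow> nat \<Rightarrow> ((nat \<times> nat) \<Rightarrow> (nat \<times> nat) \<Rightarrow> complex)
    \<Rightarrow> ((nat \<times> nat) \<Rightarrow> complex) \<Rightarrow> (nat \<times> nat) \<Rightarrow> complex" where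
  "matvec n k M v = (\<lambda>r. \<Sum>c\<in>vidx n k. M r c * v c)"

text \<open>Structure tensor of BTTB_{n,k} x C^{nk} -> C^{nk}, in the standard bases:
  coefficient of e_r in (E_{(s,t)} * e_c), where E_{(s,t)} is the basis BTTB matrix.\<close>
definition bttb_struct_tensor ::
  "nat \<Rightarrow> nat \<Rightarrow> (int \<times> int) \<Rightarrow> (nat \<times> nat) \<Rightarrow> (nat \<times> nat) \<Rightarrow> complex" where
  "bttb_struct_tensor n k st c r =
     matvec n k (bttb (\<lambda>a b. if (a, b) = st then 1 else 0)) (\<lambda>c'. if c' = c then 1 else 0) r"

end

theory Submission imports Defs "HOL-Library.Function_Algebras" begin

text \<open>The structure tensor is the indicator of "column index minus row index equals (s,t)".
  Upper bound: averaging characters of \<open>\<int>/(2n-1) \<times> \<int>/(2k-1)\<close> turns this indicator into a sum of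
  \<open>(2n-1)(2k-1)\<close> products of exponentials, one factor depending on each of (s,t), column and row;
  the moduli are large enough because all the differences involved have absolute value below them.
  Lower bound: choosing for each parameter (s,t) the column \<open>(max s 0, max t 0)\<close> and row
  \<open>(max (-s) 0, max (-t) 0)\<close> gives a restriction of the tensor that is the identity matrix on the
  parameters, so in any decomposition into r terms the parameter vectors of length r admit a
  biorthogonal system and hence number at most r.\<close>

definition has_decomposition ::
  "'a set \<Rightarrow> 'b set \<Rightarrow> 'c set \<Rightarrow> ('a \<Rightarrow> 'b \<Rightarrow> 'c \<Rightarrow> complex) \<Rightarrow> nat \<Rightarrow> bool" where
  "has_decomposition A B C T r \<longleftrightarrow>
     (\<exists>(x :: nat \<Rightarrow> 'a \<Rightarrow> complex) (y :: nat \<Rightarrow> 'b \<Rightarrow> complex) (z :: nat \<Rightarrow> 'c \<Rightarrow> complex).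
        \<forall>a\<in>A. \<forall>b\<in>B. \<forall>c\<in>C. T a b c = (\<Sum>l<r. x l a * y l b * z l c))"

lemma tensor_rank_eq_Least: "tensor_rank A B C T = (LEAST r. has_decomposition A B C T r)"
  unfolding tensor_rank_def has_decomposition_def ..

lemma has_decomposition_sum:
  fixes x :: "'i \<Rightarrow> 'a \<Rightarrow> complex" and y :: "'i \<Rightarrow> 'b \<Rightarrow> complex" and z :: "'i \<Rightarrow> 'c \<Rightarrow> complex"
  assumes "finite I"
    and "\<And>a b c. a \<in> A \<Longrightarrow> b \<in> B \<Longrightarrow> c \<in> C \<Longrightarrow> T a b c = (\<Sum>i\<in>I. x i a * y i b * z i c)"
  shows "has_decomposition A B C T (card I)"
proof -
  obtain h where h: "bij_betw h {..<card I} I"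
    using ex_bij_betw_nat_finite[OF assms(1)] by (auto simp: lessThan_atLeast0)
  show ?thesis
    unfolding has_decomposition_def
  proof (intro exI ballI)
    fix a b c assume "a \<in> A" "b \<in> B" "c \<in> C"
    then show "T a b c = (\<Sum>l<card I. x (h l) a * y (h l) b * z (h l) c)"
      using assms(2) sum.reindex_bij_betw[OF h, of "\<lambda>i. x i a * y i b * z i c"] by simp
  qed
qed

definition scale_fun :: "complex \<Rightarrow> ('i \<Rightarrow> complex) \<Rightarrow> 'i \<Rightarrow> complex" where
  "scale_fun c f = (\<lambda>i. c * f i)"

interpretation fun_vs: vector_space scale_fun
  by unfold_locales (auto simp: scale_fun_def fun_eq_iff algebra_simps)

lemma sum_fun_apply: "(\<Sum>i\<in>S. f i) x = (\<Sum>i\<in>S. f i x)"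
  by (induct S rule: infinite_finite_induct) auto

lemma card_le_of_biorthogonal:
  fixes X :: "'a \<Rightarrow> nat \<Rightarrow> complex" and W :: "nat \<Rightarrow> 'a \<Rightarrow> complex"
  assumes biorth: "\<And>a a'. a \<in> A \<Longrightarrow> a' \<in> A \<Longrightarrow> (\<Sum>l<r. X a l * W l a') = (if a = a' then 1 else 0)"
  shows "card A \<le> r"
proof -
  define v where "v a = (\<lambda>l. if l < r then X a l else 0)" for a
  define \<phi> where "\<phi> a f = (\<Sum>l<r. f l * W l a)" for a and f :: "nat \<Rightarrow> complex"
  have \<phi>_v: "\<phi> a' (v a) = (if a = a' then 1 else 0)" if "a \<in> A" "a' \<in> A" for a a'
    unfolding \<phi>_def v_def using biorth[OF that] by simp
  have inj: "inj_on v A"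
    by (rule inj_onI) (metis \<phi>_v zero_neq_one)
  have \<phi>_sum: "\<phi> a (\<Sum>u\<in>S. scale_fun (U u) u) = (\<Sum>u\<in>S. U u * \<phi> a u)" for a S U
    unfolding \<phi>_def sum_fun_apply scale_fun_def
    by (simp add: sum_distrib_left sum_distrib_right mult_ac sum.swap[of _ S])
  have indep: "fun_vs.independent (v ` A)"
  proof
    assume "fun_vs.dependent (v ` A)"
    then obtain S U u where S: "finite S" "S \<subseteq> v ` A" "(\<Sum>u\<in>S. scale_fun (U u) u) = 0"
      and u: "u \<in> S" "U u \<noteq> 0"
      unfolding fun_vs.dependent_explicit by blast
    then obtain a where a: "a \<in> A" "u = v a" by blast
    have "U u' * \<phi> a u' = (if u' = u then U u' else 0)" if "u' \<in> S" for u'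
      using that S(2) a inj by (auto simp: \<phi>_v inj_on_eq_iff)
    then have "\<phi> a (\<Sum>u\<in>S. scale_fun (U u) u) = U u"
      using S(1) u(1) by (simp add: \<phi>_sum sum.delta' cong: sum.cong)
    then show False
      using S(3) u(2) by (simp add: \<phi>_def)
  qed
  define E where "E = (\<lambda>l m. if m = l then 1 else 0 :: complex) ` {..<r}"
  have "v ` A \<subseteq> fun_vs.span E"
  proof
    fix w assume "w \<in> v ` A"
    then obtain a where "w = v a" by blast
    then have "w = (\<Sum>l<r. scale_fun (X a l) (\<lambda>m. if m = l then 1 else 0))"
      by (auto simp: v_def scale_fun_def fun_eq_iff sum_fun_apply if_distrib cong: if_cong)
    also have "\<dots> \<in> fun_vs.span E"
      by (intro fun_vs.span_sum fun_vs.span_scale fun_vs.span_base) (auto simp: E_def)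
    finally show "w \<in> fun_vs.span E" .
  qed
  then have "card (v ` A) \<le> card E"
    using fun_vs.independent_span_bound[OF _ indep] by (simp add: E_def)
  also have "\<dots> \<le> r"
    unfolding E_def using card_image_le[of "{..<r}"] by simp
  finally show ?thesis
    using card_image[OF inj] by simp
qed

lemma card_le_of_identity_restriction:
  assumes "has_decomposition A B C T r"
    and "\<And>a. a \<in> A \<Longrightarrow> \<beta> a \<in> B \<and> \<gamma> a \<in> C"
    and "\<And>a a'. a \<in> A \<Longrightarrow> a' \<in> A \<Longrightarrow> T a (\<beta> a') (\<gamma> a') = (if a = a' then 1 else 0)"
  shows "card A \<le> r"
proof -
  obtain x y z where dec: "\<forall>a\<in>A. \<forall>b\<in>B. \<forall>c\<in>C. T a b c = (\<Sum>l<r. x l a * y l b * z l c)"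
    using assms(1) unfolding has_decomposition_def by blast
  show ?thesis
  proof (rule card_le_of_biorthogonal)
    fix a a' assume "a \<in> A" "a' \<in> A"
    then show "(\<Sum>l<r. x l a * (y l (\<beta> a') * z l (\<gamma> a'))) = (if a = a' then 1 else 0)"
      using dec assms(2,3) by (simp add: mult.assoc)
  qed
qed

lemma bttb_struct_tensor_eq:
  assumes "(j, q) \<in> vidx n k"
  shows "bttb_struct_tensor n k (s, t) (j, q) (i, p) = (if int j - int i = s \<and> int q - int p = t then 1 else 0)"
proof -
  have "bttb_struct_tensor n k (s, t) (j, q) (i, p) =
      (\<Sum>c\<in>vidx n k. if c = (j, q) then bttb (\<lambda>a b. if (a, b) = (s, t) then 1 else 0) (i, p) c else 0)"
    unfolding bttb_struct_tensor_def matvec_def by (intro sum.cong) auto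
  also have "\<dots> = bttb (\<lambda>a b. if (a, b) = (s, t) then 1 else 0) (i, p) (j, q)"
    using assms by (simp add: vidx_def)
  finally show ?thesis
    by (simp add: bttb_def)
qed

lemma sum_roots_of_unity:
  fixes N :: nat and d :: int
  assumes "N > 0"
  shows "(\<Sum>l<N. cis (2 * pi * real l * of_int d / real N)) = (if int N dvd d then of_nat N else 0)"
proof -
  define z where "z = cis (2 * pi * of_int d / real N)"
  have powers: "cis (2 * pi * real l * of_int d / real N) = z ^ l" for l
    unfolding z_def DeMoivre by (simp add: mult_ac)
  have "z = 1 \<longleftrightarrow> int N dvd d"
  proof
    assume "z = 1"
    then have "cos (2 * pi * of_int d / real N) = 1"
      unfolding z_def by (metis cis.sel(1) one_complex.sel(1))
    then obtain m :: int where "2 * pi * of_int d / real N = of_int m * 2 * pi"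
      by (auto simp: cos_one_2pi_int)
    then have "real_of_int d = real_of_int (int N * m)"
      using assms by (simp add: field_simps)
    then show "int N dvd d"
      by (metis dvd_triv_left of_int_eq_iff)
  next
    assume "int N dvd d"
    then obtain m where "d = int N * m" ..
    then have "2 * pi * of_int d / real N = 2 * pi * of_int m"
      using assms by simp
    then show "z = 1"
      unfolding z_def by (simp only:) (rule cis_multiple_2pi, simp)
  qed
  moreover have "z ^ N = 1"
    unfolding z_def DeMoivre using assms by simp
  ultimately show ?thesis
    by (cases "int N dvd d") (simp_all add: powers geometric_sum)
qed

lemma bttb_struct_tensor_has_decomposition:
  assumes "n \<ge> 1" and "k \<ge> 1"
  shows "has_decomposition (bttb_params n k) (vidx n k) (vidx n k) (bttb_struct_tensor n k)
           ((2 * n - 1) * (2 * k - 1))"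
proof -
  define N where "N = 2 * n - 1"
  define M where "M = 2 * k - 1"
  have "N > 0" "M > 0"
    using assms by (auto simp: N_def M_def)
  define e where "e K u d = cis (2 * pi * real u * of_int d / real K)" for K u :: nat and d :: int
  have e_add3: "e K u d * e K u d' * e K u d'' = e K u (d + d' + d'')" for K u d d' d''
    unfolding e_def cis_mult by (simp add: distrib_left distrib_right add_divide_distrib)
  have e_sum: "(\<Sum>u<K. e K u d) = (if d = 0 then of_nat K else 0)" if "K > 0" "\<bar>d\<bar> < int K" for K d
    using sum_roots_of_unity[OF that(1)] dvd_imp_le_int[of d "int K"] that unfolding e_def
    by (cases "d = 0") auto
  define x :: "nat \<times> nat \<Rightarrow> int \<times> int \<Rightarrow> complex"
    where "x = (\<lambda>(u, v) (s, t). e N u (- s) * e M v (- t) / (of_nat N * of_nat M))"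
  define y :: "nat \<times> nat \<Rightarrow> nat \<times> nat \<Rightarrow> complex"
    where "y = (\<lambda>(u, v) (j, q). e N u (int j) * e M v (int q))"
  define z :: "nat \<times> nat \<Rightarrow> nat \<times> nat \<Rightarrow> complex"
    where "z = (\<lambda>(u, v) (i, p). e N u (- int i) * e M v (- int p))"
  have "has_decomposition (bttb_params n k) (vidx n k) (vidx n k) (bttb_struct_tensor n k)
      (card ({..<N} \<times> {..<M}))"
  proof (rule has_decomposition_sum[where x = x and y = y and z = z])
    fix a b c assume "a \<in> bttb_params n k" "b \<in> vidx n k" "c \<in> vidx n k"
    moreover obtain s t j q i p where abc: "a = (s, t)" "b = (j, q)" "c = (i, p)"
      by (metis prod.exhaust)
    moreover define d1 d2 where "d1 = int j - int i - s" and "d2 = int q - int p - t"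
    ultimately have b: "(j, q) \<in> vidx n k" and d1: "\<bar>d1\<bar> < int N" and d2: "\<bar>d2\<bar> < int M"
      using assms by (auto simp: N_def M_def bttb_params_def vidx_def)
    have summand: "x (u, v) a * y (u, v) b * z (u, v) c = e N u d1 * e M v d2 / (of_nat N * of_nat M)" for u v
    proof -
      have "x (u, v) a * y (u, v) b * z (u, v) c
          = (e N u (- s) * e N u (int j) * e N u (- int i)) * (e M v (- t) * e M v (int q) * e M v (- int p))
            / (of_nat N * of_nat M)"
        by (simp add: x_def y_def z_def abc ac_simps)
      also have "\<dots> = e N u d1 * e M v d2 / (of_nat N * of_nat M)"
        unfolding e_add3 d1_def d2_def by (simp add: algebra_simps)
      finally show ?thesis .
    qed
    have "(\<Sum>i\<in>{..<N} \<times> {..<M}. x i a * y i b * z i c)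
        = (\<Sum>(u, v)\<in>{..<N} \<times> {..<M}. e N u d1 * e M v d2 / (of_nat N * of_nat M))"
      by (rule sum.cong) (auto simp: summand)
    also have "\<dots> = (\<Sum>u<N. \<Sum>v<M. e N u d1 * e M v d2) / (of_nat N * of_nat M)"
      by (simp add: sum.cartesian_product[symmetric] sum_divide_distrib)
    also have "\<dots> = (\<Sum>u<N. e N u d1) * (\<Sum>v<M. e M v d2) / (of_nat N * of_nat M)"
      by (simp add: sum_product)
    also have "\<dots> = (if d1 = 0 \<and> d2 = 0 then 1 else 0)"
      using \<open>N > 0\<close> \<open>M > 0\<close> by (simp add: e_sum d1 d2)
    also have "\<dots> = bttb_struct_tensor n k a b c"
      by (auto simp: abc bttb_struct_tensor_eq[OF b] d1_def d2_def)
    finally show "bttb_struct_tensor n k a b c = (\<Sum>i\<in>{..<N} \<times> {..<M}. x i a * y i b * z i c)" ..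
  qed simp
  then show ?thesis
    by (simp add: N_def M_def)
qed

lemma card_bttb_params_le_decomposition:
  assumes "has_decomposition (bttb_params n k) (vidx n k) (vidx n k) (bttb_struct_tensor n k) r"
  shows "card (bttb_params n k) \<le> r"
proof (rule card_le_of_identity_restriction[OF assms])
  define col :: "int \<times> int \<Rightarrow> nat \<times> nat" where "col = (\<lambda>(s, t). (nat (max s 0), nat (max t 0)))"
  define row :: "int \<times> int \<Rightarrow> nat \<times> nat" where "row = (\<lambda>(s, t). (nat (max (- s) 0), nat (max (- t) 0)))"
  show "col a \<in> vidx n k \<and> row a \<in> vidx n k" if "a \<in> bttb_params n k" for a
    using that by (auto simp: col_def row_def vidx_def bttb_params_def)
  show "bttb_struct_tensor n k a (col a') (row a') = (if a = a' then 1 else 0)"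
    if "a \<in> bttb_params n k" "a' \<in> bttb_params n k" for a a'
  proof -
    obtain s t s' t' where st: "a = (s, t)" "a' = (s', t')"
      by (metis prod.exhaust)
    have "col a' \<in> vidx n k"
      using that by (auto simp: col_def vidx_def bttb_params_def)
    then show ?thesis
      by (auto simp: st col_def row_def bttb_struct_tensor_eq)
  qed
qed

lemma card_bttb_params: "card (bttb_params n k) = (2 * n - 1) * (2 * k - 1)"
proof -
  have "nat (2 * int m - 1) = 2 * m - 1" for m :: nat
    by (cases m) auto
  then show ?thesis
    by (simp add: bttb_params_def)
qed

theorem mainTheorem14:
  fixes n k :: nat
  assumes "n \<ge> 1" and "k \<ge> 1"
  shows "tensor_rank (bttb_params n k) (vidx n k) (vidx n k) (bttb_struct_tensor n k)
           = (2 * k - 1) * (2 * n - 1)"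
  unfolding tensor_rank_eq_Least mult.commute[of "2 * k - 1"]
proof (rule Least_equality)
  show "has_decomposition (bttb_params n k) (vidx n k) (vidx n k) (bttb_struct_tensor n k)
          ((2 * n - 1) * (2 * k - 1))"
    using assms by (rule bttb_struct_tensor_has_decomposition)
  show "(2 * n - 1) * (2 * k - 1) \<le> r"
    if "has_decomposition (bttb_params n k) (vidx n k) (vidx n k) (bttb_struct_tensor n k) r" for r
    using card_bttb_params_le_decomposition[OF that] card_bttb_params by simp
qed

end
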